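(* Let $\mathcal{T}=[0,T_{max}]$, $\mathcal{T}_d,\mathcal{T}_a\subseteq\mathcal{T}$ compact, $\mathcal{X}=[X_{min},X_{max}]$, and $m$ a probability measure on $\mathcal{X}\times\mathcal{T}_a$. For every $G\in\mathbb{R}^+$, the set $\mathcal{P}_{m,G}$ is a closed subset of the space $\mathcal{P}(\mathcal{T}_d\times\mathcal{X})$ of Borel probability measures on $\mathcal{T}_d\times\mathcal{X}$, equipped with the topology of weak convergence of measures.
   Context: $\lambda_2$ denotes Lebesgue measure on $\mathbb{R}^2$. $\mathcal{P}_{m,G}$ is the set of all $F\in\mathcal{P}(\mathcal{T}_d\times\mathcal{X})$ such that (i) $F(B)\le G\,\lambda_2(B)$ for every Borel set $B\subseteq\mathcal{T}_d\times\mathcal{X}$, and (ii) $F(\mathcal{T}_d\times B)=m(B\times\mathcal{T}_a)$ for every Borel set $B\subseteq\mathcal{X}$. *)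

theory Defs
  imports "HOL-Probability.Probability"
begin

definition prob_measures_on :: "(real \<times> real) set \<Rightarrow> (real \<times> real) measure set" where
  "prob_measures_on S =
     {F. prob_space F \<and> space F = S \<and> sets F = sets (restrict_space borel S)}"

definition weak_topology_on :: "(real \<times> real) set \<Rightarrow> (real \<times> real) measure topology" where
  "weak_topology_on S =
     subtopology
       (topology_generated_by
          {{F. (\<integral>z. f z \<partial>F) \<in> U} | f U.
              continuous_on S f \<and> bounded (f ` S) \<and> open (U :: real set)})
       (prob_measures_on S)"

text \<open>The set P_{m,G}: measures F on Td \<times> X with F(B) \<le> G \<lambda>2(B) for Borel B,
  and whose X-marginal equals the X-marginal of m (m lives on X \<times> Ta).\<close>
definition P_mG ::
  "real set \<Rightarrow> real set \<Rightarrow> real set \<Rightarrow> (real \<times> real) measure \<Rightarrow> real \<Rightarrow> (real \<times> real) measure set" where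
  "P_mG Td X Ta m G =
     {F \<in> prob_measures_on (Td \<times> X).
        (\<forall>B \<in> sets borel. B \<subseteq> Td \<times> X \<longrightarrow> emeasure F B \<le> ennreal G * emeasure lborel B) \<and>
        (\<forall>B \<in> sets borel. B \<subseteq> X \<longrightarrow> emeasure F (Td \<times> B) = emeasure m (B \<times> Ta))}"

end

theory Submission
  imports Defs
begin

(*
  The weak topology is generated by the maps F \<mapsto> \<integral> f dF with f bounded and continuous, so
  every set of probability measures cut out by conditions \<integral> f dF \<in> C with C closed is weakly
  closed.  Both conditions defining P_{m,G} can be written in this form.

  The density bound F \<le> G \<lambda>\<^sub>2 on Borel sets is equivalent to \<integral> \<phi> dF \<le> G \<integral> \<phi> d\<lambda>\<^sub>2 for the
  cutoffs \<phi> = max 0 (1 - n d(-, K)) of nonempty compact sets K: they decrease to the indicator of K,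
  so by dominated convergence they yield F(K) \<le> G \<lambda>\<^sub>2(K), and inner regularity of F passes from
  compact to Borel sets.

  The marginal condition says that the law of the second coordinate under F equals the law of the
  first coordinate under m.  By Levy's uniqueness theorem this holds iff the two characteristic
  functions agree, i.e. iff the integrals of cos (t x) and sin (t x) agree for all t.
*)

lemma topspace_weak_topology_on: "topspace (weak_topology_on S) = prob_measures_on S"
proof -
  define tests :: "(real \<times> real) measure set set" where "tests = {{F. (\<integral>z. f z \<partial>F) \<in> U} | f U.
    continuous_on S f \<and> bounded (f ` S) \<and> open (U :: real set)}"
  have "bounded ((\<lambda>_. 0 :: real) ` S)"
    by (rule bounded_subset[of "{0}"]) auto
  then have "UNIV \<in> tests"
    unfolding tests_def by (intro CollectI exI[of _ "\<lambda>_. 0"] exI[of _ UNIV]) simp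
  then have "\<Union> tests = UNIV"
    by blast
  then show ?thesis
    unfolding weak_topology_on_def tests_def[symmetric] by simp
qed

lemma closedin_weak_topology_on_integral_in:
  fixes f :: "real \<times> real \<Rightarrow> real"
  assumes "continuous_on S f" "bounded (f ` S)" "closed C"
  shows "closedin (weak_topology_on S) {F \<in> prob_measures_on S. (\<integral>z. f z \<partial>F) \<in> C}"
proof -
  let ?U = "{F. (\<integral>z. f z \<partial>F) \<in> - C}"
  have U: "?U \<in> {{F. (\<integral>z. f z \<partial>F) \<in> U} | f U. continuous_on S f \<and> bounded (f ` S) \<and> open (U :: real set)}"
    by (rule CollectI, rule exI[of _ f], rule exI[of _ "- C"]) (simp add: assms open_Compl)
  have "openin (weak_topology_on S) (prob_measures_on S \<inter> ?U)"
    unfolding weak_topology_on_def openin_subtopology openin_topology_generated_by_iff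
    by (intro exI[of _ ?U] conjI generate_topology_on.Basis[OF U] Int_commute)
  then have "closedin (weak_topology_on S) (prob_measures_on S - prob_measures_on S \<inter> ?U)"
    using closedin_topspace[of "weak_topology_on S"]
    by (intro closedin_diff) (simp_all add: topspace_weak_topology_on)
  moreover have "prob_measures_on S - prob_measures_on S \<inter> ?U
      = {F \<in> prob_measures_on S. (\<integral>z. f z \<partial>F) \<in> C}"
    by auto
  ultimately show ?thesis by simp
qed

lemma closedin_weak_topology_on_integral_constraints:
  fixes f :: "'i \<Rightarrow> real \<times> real \<Rightarrow> real"
  assumes "\<And>i. i \<in> I \<Longrightarrow> continuous_on S (f i)" "\<And>i. i \<in> I \<Longrightarrow> bounded (f i ` S)"
    and "\<And>i. i \<in> I \<Longrightarrow> closed (C i)"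
  shows "closedin (weak_topology_on S) {F \<in> prob_measures_on S. \<forall>i\<in>I. (\<integral>z. f i z \<partial>F) \<in> C i}"
proof -
  have "{F \<in> prob_measures_on S. \<forall>i\<in>I. (\<integral>z. f i z \<partial>F) \<in> C i}
      = \<Inter> (insert (prob_measures_on S) ((\<lambda>i. {F \<in> prob_measures_on S. (\<integral>z. f i z \<partial>F) \<in> C i}) ` I))"
    by auto
  also have "closedin (weak_topology_on S) \<dots>"
    using assms closedin_topspace[of "weak_topology_on S", unfolded topspace_weak_topology_on]
    by (intro closedin_Inter) (auto intro: closedin_weak_topology_on_integral_in)
  finally show ?thesis .
qed

lemma borel_measurable_continuous_on_restrict_sets:
  assumes "sets M = sets (restrict_space borel S)" "continuous_on S f"
  shows "f \<in> borel_measurable M"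
  using borel_measurable_continuous_on_restrict[OF assms(2)] measurable_cong_sets[OF assms(1) refl]
  by blast

definition infdist_cutoff :: "'a::metric_space set \<Rightarrow> nat \<Rightarrow> 'a \<Rightarrow> real" where
  "infdist_cutoff K n z = max 0 (1 - real n * infdist z K)"

lemma infdist_cutoff_nonneg: "0 \<le> infdist_cutoff K n z"
  by (simp add: infdist_cutoff_def)

lemma infdist_cutoff_le_one: "infdist_cutoff K n z \<le> 1"
  using infdist_nonneg[of z K] by (simp add: infdist_cutoff_def)

lemma continuous_on_infdist_cutoff: "continuous_on S (infdist_cutoff K n)"
  unfolding infdist_cutoff_def by (intro continuous_intros)

lemma bounded_infdist_cutoff_image: "bounded (infdist_cutoff K n ` S)"
  using infdist_cutoff_nonneg[of K n] infdist_cutoff_le_one[of K n]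
  by (intro boundedI[where B=1]) auto

lemma infdist_cutoff_LIMSEQ_indicator:
  assumes "closed K" "K \<noteq> {}"
  shows "(\<lambda>n. infdist_cutoff K n z) \<longlonglongrightarrow> indicator K z"
proof (cases "z \<in> K")
  case True
  then show ?thesis by (simp add: infdist_cutoff_def)
next
  case False
  then have d: "infdist z K > 0"
    using assms infdist_pos_not_in_closed by blast
  have "eventually (\<lambda>n. infdist_cutoff K n z = 0) sequentially"
  proof (rule eventually_sequentiallyI)
    fix n assume "nat \<lceil>1 / infdist z K\<rceil> \<le> n"
    then have "1 / infdist z K \<le> real n" by linarith
    then have "1 \<le> real n * infdist z K" using d by (simp add: field_simps)
    then show "infdist_cutoff K n z = 0" by (simp add: infdist_cutoff_def)
  qed
  then show ?thesis using False by (simp add: tendsto_eventually)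
qed

lemma integral_infdist_cutoff_LIMSEQ:
  fixes M :: "'a::metric_space measure"
  assumes "finite_measure M" and sM: "sets M = sets (restrict_space borel S)"
    and K: "closed K" "K \<noteq> {}" "K \<subseteq> S"
  shows "(\<lambda>n. \<integral>z. infdist_cutoff K n z \<partial>M) \<longlonglongrightarrow> measure M K"
proof -
  interpret finite_measure M by fact
  have "space M = S" using sets_eq_imp_space_eq[OF sM] by (simp add: space_restrict_space)
  have "K \<in> sets M"
    using K unfolding sM sets_restrict_space by (auto intro!: image_eqI[of _ _ K] borel_closed)
  have "(\<lambda>n. \<integral>z. infdist_cutoff K n z \<partial>M) \<longlonglongrightarrow> (\<integral>z. indicator K z \<partial>M)"
  proof (rule integral_dominated_convergence[where w="\<lambda>_. 1"])
    show "(indicator K :: 'a \<Rightarrow> real) \<in> borel_measurable M"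
      using \<open>K \<in> sets M\<close> by simp
    show "infdist_cutoff K n \<in> borel_measurable M" for n
      by (rule borel_measurable_continuous_on_restrict_sets[OF sM continuous_on_infdist_cutoff])
    show "AE z in M. (\<lambda>n. infdist_cutoff K n z) \<longlonglongrightarrow> indicator K z"
      using infdist_cutoff_LIMSEQ_indicator[OF K(1,2)] by simp
    show "AE z in M. norm (infdist_cutoff K n z) \<le> 1" for n
      using infdist_cutoff_nonneg[of K n] infdist_cutoff_le_one[of K n] by simp
  qed simp
  then show ?thesis
    using \<open>space M = S\<close> K(3) by (simp add: Int_absorb2)
qed

lemma integral_le_scaled_if_emeasure_le:
  fixes f :: "'a \<Rightarrow> real"
  assumes sets_eq: "sets M = sets N"
    and le: "\<And>A. A \<in> sets M \<Longrightarrow> emeasure M A \<le> ennreal c * emeasure N A"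
    and "c \<ge> 0" and f: "\<And>x. 0 \<le> f x" "integrable M f" "integrable N f"
  shows "(\<integral>x. f x \<partial>M) \<le> c * (\<integral>x. f x \<partial>N)"
proof -
  have "emeasure M A \<le> ennreal c * emeasure N A" for A
    using le sets_eq by (cases "A \<in> sets M") (auto simp: emeasure_notin_sets)
  then have "M \<le> scale_measure (ennreal c) N"
    using sets_eq sets_eq_imp_space_eq[OF sets_eq]
    by (simp add: le_measure_iff le_fun_def space_scale_measure)
  have "ennreal (\<integral>x. f x \<partial>M) = (\<integral>\<^sup>+x. f x \<partial>M)"
    using f by (simp add: nn_integral_eq_integral)
  also have "\<dots> \<le> (\<integral>\<^sup>+x. f x \<partial>scale_measure (ennreal c) N)"
    using sets_eq \<open>M \<le> scale_measure (ennreal c) N\<close> by (intro nn_integral_mono_measure) simp_all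
  also have "\<dots> = ennreal c * (\<integral>\<^sup>+x. f x \<partial>N)"
    using f(3) by (simp add: nn_integral_scale_measure)
  also have "\<dots> = ennreal (c * (\<integral>x. f x \<partial>N))"
    using f \<open>c \<ge> 0\<close> by (simp add: nn_integral_eq_integral ennreal_mult')
  finally show ?thesis
    using f \<open>c \<ge> 0\<close> by (simp add: ennreal_le_iff integral_nonneg)
qed

lemma emeasure_le_if_compact_le:
  fixes F N :: "'a::polish_space measure"
  assumes F: "finite_measure F" and sF: "sets F = sets (restrict_space borel S)"
    and sN: "sets N = sets F" and S: "S \<in> sets borel"
    and compact_le: "\<And>K. compact K \<Longrightarrow> K \<subseteq> S \<Longrightarrow> emeasure F K \<le> emeasure N K"
    and A: "A \<in> sets F"
  shows "emeasure F A \<le> emeasure N A"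
proof -
  have spF: "space F = S" using sets_eq_imp_space_eq[OF sF] by (simp add: space_restrict_space)
  have AS: "A \<subseteq> S" and Ab: "A \<in> sets borel"
    using A S by (auto simp: sF sets_restrict_space_iff)
  define F' where "F' = distr F borel (\<lambda>x. x)"
  have id: "(\<lambda>x. x) \<in> measurable F borel"
    unfolding measurable_cong_sets[OF sF refl] by (rule measurable_restrict_space1) simp
  have eF': "emeasure F' B = emeasure F (B \<inter> S)" if "B \<in> sets borel" for B
    unfolding F'_def using emeasure_distr[OF id that] spF by simp
  have "emeasure F' (space F') \<noteq> \<infinity>"
    using eF'[of UNIV] spF finite_measure.emeasure_finite[OF F, of S] by (simp add: F'_def)
  then have "emeasure F' A = (SUP K \<in> {K. K \<subseteq> A \<and> compact K}. emeasure F' K)"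
    by (intro inner_regular Ab) (simp add: F'_def)
  also have "\<dots> \<le> emeasure N A"
  proof (rule SUP_least)
    fix K assume K: "K \<in> {K. K \<subseteq> A \<and> compact K}"
    then have "K \<subseteq> S" "K \<in> sets borel" using AS by (auto intro: borel_compact)
    then have "emeasure F' K = emeasure F K" using eF' by (simp add: Int_absorb2)
    also have "\<dots> \<le> emeasure N K" using compact_le K \<open>K \<subseteq> S\<close> by auto
    also have "\<dots> \<le> emeasure N A" using K A sN by (intro emeasure_mono) auto
    finally show "emeasure F' K \<le> emeasure N A" .
  qed
  finally show ?thesis
    using eF'[OF Ab] AS by (simp add: Int_absorb2)
qed

lemma emeasure_le_scaled_iff_integral_infdist_cutoff_le:
  fixes F L :: "'a::polish_space measure"
  assumes F: "finite_measure F" and L: "finite_measure L"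
    and sF: "sets F = sets (restrict_space borel S)" and sL: "sets L = sets F"
    and S: "S \<in> sets borel" and c: "c \<ge> 0"
  shows "(\<forall>A\<in>sets F. emeasure F A \<le> ennreal c * emeasure L A) \<longleftrightarrow>
    (\<forall>K n. compact K \<longrightarrow> K \<noteq> {} \<longrightarrow> K \<subseteq> S \<longrightarrow>
      (\<integral>z. infdist_cutoff K n z \<partial>F) \<le> c * (\<integral>z. infdist_cutoff K n z \<partial>L))"
proof -
  have integrable: "integrable M (infdist_cutoff K n)"
    if "finite_measure M" "sets M = sets (restrict_space borel S)" for M K n
    using infdist_cutoff_nonneg[of K n] infdist_cutoff_le_one[of K n]
      borel_measurable_continuous_on_restrict_sets[OF that(2) continuous_on_infdist_cutoff]
    by (intro finite_measure.integrable_const_bound[OF that(1), where B=1]) auto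
  show ?thesis
  proof
    assume le: "\<forall>A\<in>sets F. emeasure F A \<le> ennreal c * emeasure L A"
    show "\<forall>K n. compact K \<longrightarrow> K \<noteq> {} \<longrightarrow> K \<subseteq> S \<longrightarrow>
      (\<integral>z. infdist_cutoff K n z \<partial>F) \<le> c * (\<integral>z. infdist_cutoff K n z \<partial>L)"
    proof (intro allI impI)
      fix K n
      show "(\<integral>z. infdist_cutoff K n z \<partial>F) \<le> c * (\<integral>z. infdist_cutoff K n z \<partial>L)"
        using le by (intro integral_le_scaled_if_emeasure_le[OF sL[symmetric] _ c infdist_cutoff_nonneg
            integrable[OF F sF] integrable[OF L sL[unfolded sF]]]) auto
    qed
  next
    assume cutoff_le: "\<forall>K n. compact K \<longrightarrow> K \<noteq> {} \<longrightarrow> K \<subseteq> S \<longrightarrow>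
      (\<integral>z. infdist_cutoff K n z \<partial>F) \<le> c * (\<integral>z. infdist_cutoff K n z \<partial>L)"
    have compact_le: "emeasure F K \<le> emeasure (scale_measure (ennreal c) L) K"
      if "compact K" "K \<subseteq> S" for K
    proof (cases "K = {}")
      case False
      have "measure F K \<le> c * measure L K"
      proof (rule LIMSEQ_le)
        show "(\<lambda>n. \<integral>z. infdist_cutoff K n z \<partial>F) \<longlonglongrightarrow> measure F K"
          using that False by (intro integral_infdist_cutoff_LIMSEQ[OF F sF] compact_imp_closed)
        show "(\<lambda>n. c * (\<integral>z. infdist_cutoff K n z \<partial>L)) \<longlonglongrightarrow> c * measure L K"
          using that False sL sF
          by (intro tendsto_mult_left integral_infdist_cutoff_LIMSEQ[OF L] compact_imp_closed) auto
      qed (use cutoff_le that False in auto)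
      then show ?thesis
        using c by (simp add: finite_measure.emeasure_eq_measure[OF F]
            finite_measure.emeasure_eq_measure[OF L] ennreal_mult'[symmetric])
    qed simp
    show "\<forall>A\<in>sets F. emeasure F A \<le> ennreal c * emeasure L A"
      using emeasure_le_if_compact_le[OF F sF _ S compact_le] sL by simp
  qed
qed

lemma emeasure_le_lborel_iff_integral_infdist_cutoff_le:
  fixes F :: "'a::euclidean_space measure"
  assumes F: "finite_measure F" and sF: "sets F = sets (restrict_space borel S)"
    and S: "compact S" and c: "c \<ge> 0"
  shows "(\<forall>B\<in>sets borel. B \<subseteq> S \<longrightarrow> emeasure F B \<le> ennreal c * emeasure lborel B) \<longleftrightarrow>
    (\<forall>K n. compact K \<longrightarrow> K \<noteq> {} \<longrightarrow> K \<subseteq> S \<longrightarrow>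
      (\<integral>z. infdist_cutoff K n z \<partial>F) \<le> c * (\<integral>z. infdist_cutoff K n z \<partial>restrict_space lborel S))"
proof -
  let ?L = "restrict_space lborel S"
  have Sb: "S \<in> sets borel" using S by (rule borel_compact)
  have sL: "sets ?L = sets F" using sF by (simp add: sets_restrict_space)
  have L: "finite_measure ?L"
    using emeasure_compact_finite[OF S] Sb
    by (intro finite_measureI) (simp add: space_restrict_space emeasure_restrict_space)
  have "(\<forall>B\<in>sets borel. B \<subseteq> S \<longrightarrow> emeasure F B \<le> ennreal c * emeasure lborel B) \<longleftrightarrow>
      (\<forall>A\<in>sets F. emeasure F A \<le> ennreal c * emeasure ?L A)"
    using Sb by (auto simp: sF sets_restrict_space_iff emeasure_restrict_space)
  also have "\<dots> \<longleftrightarrow> (\<forall>K n. compact K \<longrightarrow> K \<noteq> {} \<longrightarrow> K \<subseteq> S \<longrightarrow>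
      (\<integral>z. infdist_cutoff K n z \<partial>F) \<le> c * (\<integral>z. infdist_cutoff K n z \<partial>?L))"
    by (rule emeasure_le_scaled_iff_integral_infdist_cutoff_le[OF F L sF sL Sb c])
  finally show ?thesis .
qed

lemma char_eq_integral_cos_sin:
  assumes "real_distribution D"
  shows "char D t = Complex (\<integral>x. cos (t * x) \<partial>D) (\<integral>x. sin (t * x) \<partial>D)"
proof -
  interpret real_distribution D by fact
  have "integrable D (\<lambda>x. iexp (t * x))"
    by (rule integrable_iexp) auto
  then show ?thesis
    unfolding char_def
    by (intro complex_eqI) (simp_all add: integral_Re[symmetric] integral_Im[symmetric] Re_exp Im_exp)
qed

lemma real_distribution_eq_iff_integral_cos_sin:
  assumes "real_distribution D1" "real_distribution D2"
  shows "D1 = D2 \<longleftrightarrow> (\<forall>t. (\<integral>x. cos (t * x) \<partial>D1) = (\<integral>x. cos (t * x) \<partial>D2) \<and>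
                          (\<integral>x. sin (t * x) \<partial>D1) = (\<integral>x. sin (t * x) \<partial>D2))"
proof
  assume "\<forall>t. (\<integral>x. cos (t * x) \<partial>D1) = (\<integral>x. cos (t * x) \<partial>D2) \<and>
             (\<integral>x. sin (t * x) \<partial>D1) = (\<integral>x. sin (t * x) \<partial>D2)"
  then have "char D1 = char D2"
    by (simp add: fun_eq_iff char_eq_integral_cos_sin[OF assms(1)] char_eq_integral_cos_sin[OF assms(2)])
  then show "D1 = D2"
    by (rule Levy_uniqueness[OF assms])
qed simp

lemma marginal_eq_iff_distr_eq:
  assumes spF: "space F = Td \<times> X" and spm: "space m = X \<times> Ta"
    and "snd \<in> borel_measurable F" "fst \<in> borel_measurable m" and X: "X \<in> sets borel"
  shows "(\<forall>B\<in>sets borel. B \<subseteq> X \<longrightarrow> emeasure F (Td \<times> B) = emeasure m (B \<times> Ta)) \<longleftrightarrow>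
    distr F borel snd = distr m borel fst"
proof -
  have eF: "emeasure (distr F borel snd) B = emeasure F (Td \<times> (B \<inter> X))" if "B \<in> sets borel" for B
  proof -
    have "snd -` B \<inter> space F = Td \<times> (B \<inter> X)" using spF by auto
    then show ?thesis using emeasure_distr[OF assms(3) that] by simp
  qed
  have em: "emeasure (distr m borel fst) B = emeasure m ((B \<inter> X) \<times> Ta)" if "B \<in> sets borel" for B
  proof -
    have "fst -` B \<inter> space m = (B \<inter> X) \<times> Ta" using spm by auto
    then show ?thesis using emeasure_distr[OF assms(4) that] by simp
  qed
  show ?thesis
  proof
    assume "\<forall>B\<in>sets borel. B \<subseteq> X \<longrightarrow> emeasure F (Td \<times> B) = emeasure m (B \<times> Ta)"
    then show "distr F borel snd = distr m borel fst"
      using eF em X by (intro measure_eqI) auto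
  next
    assume "distr F borel snd = distr m borel fst"
    then show "\<forall>B\<in>sets borel. B \<subseteq> X \<longrightarrow> emeasure F (Td \<times> B) = emeasure m (B \<times> Ta)"
      using eF em by (metis Int_absorb2)
  qed
qed

lemma marginal_eq_iff_integral_cos_sin:
  fixes F :: "('a \<times> real) measure" and m :: "(real \<times> 'b) measure"
  assumes F: "prob_space F" "space F = Td \<times> X" "snd \<in> borel_measurable F"
    and m: "prob_space m" "space m = X \<times> Ta" "fst \<in> borel_measurable m"
    and X: "X \<in> sets borel"
  shows "(\<forall>B\<in>sets borel. B \<subseteq> X \<longrightarrow> emeasure F (Td \<times> B) = emeasure m (B \<times> Ta)) \<longleftrightarrow>
    (\<forall>t. (\<integral>z. cos (t * snd z) \<partial>F) = (\<integral>z. cos (t * fst z) \<partial>m) \<and>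
         (\<integral>z. sin (t * snd z) \<partial>F) = (\<integral>z. sin (t * fst z) \<partial>m))"
proof -
  have "real_distribution (distr F borel snd)" "real_distribution (distr m borel fst)"
    using prob_space.prob_space_distr F(1,3) m(1,3)
    by (auto simp: real_distribution_def real_distribution_axioms_def)
  moreover have "(\<lambda>x. cos (t * x)) \<in> borel_measurable borel" "(\<lambda>x. sin (t * x)) \<in> borel_measurable borel"
    for t :: real
    by (auto intro!: borel_measurable_continuous_onI continuous_intros)
  ultimately show ?thesis
    unfolding marginal_eq_iff_distr_eq[OF F(2) m(2) F(3) m(3) X]
    by (simp add: real_distribution_eq_iff_integral_cos_sin integral_distr F(3) m(3))
qed

lemma P_mG_eq_integral_tests:
  fixes Td X Ta :: "real set" and m :: "(real \<times> real) measure"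
  assumes S: "compact (Td \<times> X)" and X: "X \<in> sets borel"
    and m: "prob_space m" "space m = X \<times> Ta" "sets m = sets (restrict_space borel (X \<times> Ta))"
    and G: "G \<ge> 0"
  shows "P_mG Td X Ta m G = {F \<in> prob_measures_on (Td \<times> X).
    (\<forall>K n. compact K \<longrightarrow> K \<noteq> {} \<longrightarrow> K \<subseteq> Td \<times> X \<longrightarrow>
      (\<integral>z. infdist_cutoff K n z \<partial>F) \<le> G * (\<integral>z. infdist_cutoff K n z \<partial>restrict_space lborel (Td \<times> X))) \<and>
    (\<forall>t. (\<integral>z. cos (t * snd z) \<partial>F) = (\<integral>z. cos (t * fst z) \<partial>m) \<and>
         (\<integral>z. sin (t * snd z) \<partial>F) = (\<integral>z. sin (t * fst z) \<partial>m))}"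
    (is "_ = ?tests")
proof (intro set_eqI)
  fix F
  show "F \<in> P_mG Td X Ta m G \<longleftrightarrow> F \<in> ?tests"
  proof (cases "F \<in> prob_measures_on (Td \<times> X)")
    case True
    then have F: "prob_space F" "space F = Td \<times> X" "sets F = sets (restrict_space borel (Td \<times> X))"
      by (auto simp: prob_measures_on_def)
    have "(\<forall>B\<in>sets borel. B \<subseteq> Td \<times> X \<longrightarrow> emeasure F B \<le> ennreal G * emeasure lborel B) \<longleftrightarrow>
        (\<forall>K n. compact K \<longrightarrow> K \<noteq> {} \<longrightarrow> K \<subseteq> Td \<times> X \<longrightarrow>
          (\<integral>z. infdist_cutoff K n z \<partial>F) \<le> G * (\<integral>z. infdist_cutoff K n z \<partial>restrict_space lborel (Td \<times> X)))"
      using F(1) by (intro emeasure_le_lborel_iff_integral_infdist_cutoff_le[OF _ F(3) S G])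
        (simp add: prob_space_def)
    moreover have "(\<forall>B\<in>sets borel. B \<subseteq> X \<longrightarrow> emeasure F (Td \<times> B) = emeasure m (B \<times> Ta)) \<longleftrightarrow>
        (\<forall>t. (\<integral>z. cos (t * snd z) \<partial>F) = (\<integral>z. cos (t * fst z) \<partial>m) \<and>
             (\<integral>z. sin (t * snd z) \<partial>F) = (\<integral>z. sin (t * fst z) \<partial>m))"
    proof (rule marginal_eq_iff_integral_cos_sin[OF F(1,2) _ m(1,2) _ X])
      show "snd \<in> borel_measurable F"
        by (rule borel_measurable_continuous_on_restrict_sets[OF F(3)]) (intro continuous_intros)
      show "fst \<in> borel_measurable m"
        by (rule borel_measurable_continuous_on_restrict_sets[OF m(3)]) (intro continuous_intros)
    qed
    ultimately show ?thesis
      using True by (simp add: P_mG_def)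
  qed (simp add: P_mG_def)
qed

theorem proposition3:
  fixes Tmax Xmin Xmax G :: real
    and Td Ta :: "real set"
    and m :: "(real \<times> real) measure"
  assumes "compact Td" and "Td \<subseteq> {0..Tmax}"
    and "compact Ta" and "Ta \<subseteq> {0..Tmax}"
    and "prob_space m"
    and "space m = {Xmin..Xmax} \<times> Ta"
    and "sets m = sets (restrict_space borel ({Xmin..Xmax} \<times> Ta))"
    and "G > 0"
  shows "closedin (weak_topology_on (Td \<times> {Xmin..Xmax})) (P_mG Td {Xmin..Xmax} Ta m G)"
proof -
  let ?S = "Td \<times> {Xmin..Xmax}"
  let ?density = "{F \<in> prob_measures_on ?S. \<forall>p\<in>{(K, n :: nat). compact K \<and> K \<noteq> {} \<and> K \<subseteq> ?S}.
    (\<integral>z. infdist_cutoff (fst p) (snd p) z \<partial>F)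
      \<in> {..G * (\<integral>z. infdist_cutoff (fst p) (snd p) z \<partial>restrict_space lborel ?S)}}"
  let ?cos = "{F \<in> prob_measures_on ?S. \<forall>t\<in>UNIV. (\<integral>z. cos (t * snd z) \<partial>F) \<in> {\<integral>z. cos (t * fst z) \<partial>m}}"
  let ?sin = "{F \<in> prob_measures_on ?S. \<forall>t\<in>UNIV. (\<integral>z. sin (t * snd z) \<partial>F) \<in> {\<integral>z. sin (t * fst z) \<partial>m}}"
  have "P_mG Td {Xmin..Xmax} Ta m G = ?density \<inter> ?cos \<inter> ?sin"
    unfolding P_mG_eq_integral_tests[OF compact_Times[OF assms(1) compact_Icc] atLeastAtMost_borel
        assms(5-7) less_imp_le[OF assms(8)]]
    by auto
  moreover have "closedin (weak_topology_on ?S) ?density"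
    by (intro closedin_weak_topology_on_integral_constraints)
      (auto simp: continuous_on_infdist_cutoff bounded_infdist_cutoff_image)
  moreover have "closedin (weak_topology_on ?S) ?cos"
    by (intro closedin_weak_topology_on_integral_constraints)
      (auto intro!: continuous_intros boundedI[where B=1])
  moreover have "closedin (weak_topology_on ?S) ?sin"
    by (intro closedin_weak_topology_on_integral_constraints)
      (auto intro!: continuous_intros boundedI[where B=1])
  ultimately show ?thesis
    by (simp only: closedin_Int)
qed

end
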